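(* For every integer $j\ge 1$ the following identities hold (in each sum the $m=0$ term uses $\zeta(0)=-\tfrac12$): (a) $\displaystyle (3^{1-2j}-1)\zeta(2j)=\frac{(-1)^j j(2\pi)^{2j}}{(2j)!\,3^{2j-1}}+(-1)^{j+1}(2\pi)^{2j}\sum_{m=0}^{j}\frac{(-1)^{m+1}}{(2j-2m)!\,2^{2m-1}\,3^{2j-2m}\,\pi^{2m}}\zeta(2m)$; (b) $\displaystyle (4^{1-2j}-2^{1-2j})\zeta(2j)=\frac{(-1)^j j(2\pi)^{2j}}{(2j)!\,4^{2j-1}}+(-1)^{j+1}(2\pi)^{2j}\sum_{m=0}^{j}\frac{(-1)^{m+1}}{(2j-2m)!\,2^{2m-1}\,4^{2j-2m}\,\pi^{2m}}\zeta(2m)$; (c) $\displaystyle (6^{1-2j}-3^{1-2j}-2^{1-2j}+1)\zeta(2j)=\frac{(-1)^j j(2\pi)^{2j}}{(2j)!\,6^{2j-1}}+(-1)^{j+1}(2\pi)^{2j}\sum_{m=0}^{j}\frac{(-1)^{m+1}}{(2j-2m)!\,2^{2m-1}\,6^{2j-2m}\,\pi^{2m}}\zeta(2m)$; (d) $\displaystyle -\frac{j}{12^{2j-1}}(1+7^{2j-1})+\sum_{m=0}^{j}\frac{(2j)!}{(2j-2m)!}\frac{(-1)^{m+1}}{2^{2m-1}\pi^{2m}}(1+7^{2j-2m})\frac{\zeta(2m)}{12^{2j-2m}}=\frac{(6^{1-2j}-3^{1-2j}-2^{1-2j}+1)(2j)!(-1)^{j+1}}{2^{4j-1}\pi^{2j}}\zeta(2j)$;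 (e) $\displaystyle -\frac{j}{8^{2j-1}}(1+5^{2j-1})+\sum_{m=0}^{j}\frac{(2j)!}{(2j-2m)!}\frac{(-1)^{m+1}}{2^{2m-1}\pi^{2m}}(1+5^{2j-2m})\frac{\zeta(2m)}{8^{2j-2m}}=\frac{(4^{1-2j}-2^{1-2j})(2j)!(-1)^{j+1}}{2^{4j-1}\pi^{2j}}\zeta(2j)$.
   Context: $\zeta$ denotes the Riemann zeta function (analytically continued), so $\zeta(0)=-1/2$. *)

theory Defs
  imports "HOL-Analysis.Analysis"
begin

text \<open>Riemann zeta function, needed here only at the points s = 2m (m a natural number).
  For s > 1 it is the Dirichlet series; at s = 0 the analytic continuation gives -1/2.
  Other arguments are never used in the statement.\<close>
definition zeta :: "real \<Rightarrow> real" where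
  "zeta s = (if s = 0 then - 1 / 2 else (\<Sum>n. 1 / (real (Suc n)) powr s))"

end

theory Submission
  imports Defs
begin

text \<open>The numbers zeta(2m) are the Taylor coefficients of h(y) = -(y/4) cot(y/2):
  h(y) = sum_m zeta(2m) (y/(2 pi))^(2m) for |y| < 2 pi. This follows by expanding the partial
  fractions of pi cot(pi x) geometrically, and those partial fractions come from the reflection
  formulas for Gamma and Digamma.
  Each of the identities (a)-(e) compares the coefficients of y^(2j) in an elementary
  trigonometric relation between rescaled copies of h. For (a) it is
  3 h(x/3) - h(x) = -(x/2) sin(x/3) + 2 cos(x/3) h(x), i.e. cot u - cot 3u = 2 cos u / sin 3u;
  (b) and (c) are analogous, and (d), (e) follow from (c), (b) taken at x/2 together with
  sin(2v+u) + cot(2v) (cos u + cos(2v+u)) = cot v cos u.\<close>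

section \<open>Even zeta values as Taylor coefficients of the cotangent\<close>

lemma Gamma_reflection_real:
  fixes t :: real
  shows "Gamma t * Gamma (1 - t) = pi / sin (pi * t)"
proof -
  have "complex_of_real (Gamma t * Gamma (1 - t)) = Gamma (of_real t) * Gamma (1 - of_real t)"
    by (simp flip: Gamma_complex_of_real)
  also have "\<dots> = of_real pi / sin (of_real pi * of_real t)"
    by (rule Gamma_reflection_complex)
  also have "\<dots> = complex_of_real (pi / sin (pi * t))"
    by (simp flip: sin_of_real)
  finally show ?thesis by (simp only: of_real_eq_iff)
qed

lemma Digamma_reflection_real:
  fixes x :: real
  assumes "x \<notin> \<int>"
  shows "Digamma x - Digamma (1 - x) = - pi * cot (pi * x)"
proof -
  have x: "x \<notin> \<int>\<^sub>\<le>\<^sub>0" "1 - x \<notin> \<int>\<^sub>\<le>\<^sub>0"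
    using assms nonpos_Ints_subset_Ints Ints_diff[of 1 "1 - x"] by auto
  have sin: "sin (pi * x) \<noteq> 0"
    using assms by (auto simp: sin_zero_iff_int2)
  have "((\<lambda>t. Gamma t * Gamma (1 - t)) has_field_derivative
      Gamma x * Gamma (1 - x) * (Digamma x - Digamma (1 - x))) (at x)"
    using x by (auto intro!: derivative_eq_intros simp: algebra_simps)
  moreover have "((\<lambda>t. Gamma t * Gamma (1 - t)) has_field_derivative
      - pi * cos (pi * x) * pi / (sin (pi * x))\<^sup>2) (at x)"
    unfolding Gamma_reflection_real
    using sin by (auto intro!: derivative_eq_intros simp: power2_eq_square)
  ultimately have eq: "pi / sin (pi * x) * (Digamma x - Digamma (1 - x))
      = - pi * cos (pi * x) * pi / (sin (pi * x))\<^sup>2"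
    by (simp only: DERIV_unique Gamma_reflection_real)
  have "Digamma x - Digamma (1 - x)
      = sin (pi * x) / pi * (pi / sin (pi * x) * (Digamma x - Digamma (1 - x)))"
    using sin by simp
  also have "\<dots> = - pi * cot (pi * x)"
    unfolding eq using sin by (simp add: cot_def power2_eq_square)
  finally show ?thesis .
qed

lemma cot_partial_fractions:
  fixes x :: real
  assumes "x \<notin> \<int>"
  shows "(\<lambda>n. 2 * x / ((real n + 1)\<^sup>2 - x\<^sup>2)) sums (1 / x - pi * cot (pi * x))"
proof -
  have nz: "x + of_int i \<noteq> 0" for i :: int
  proof
    assume "x + of_int i = 0"
    then have "x = of_int (- i)" by simp
    with assms show False by auto
  qed
  have nz0: "x \<noteq> 0" "1 - x \<noteq> 0"
    using nz[of 0] nz[of "-1"] by auto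
  have nz_k: "x + real k \<noteq> 0" "1 - x + real k \<noteq> 0" for k
    using nz[of "int k"] nz[of "- 1 - int k"] by auto
  have s1: "(\<lambda>k. inverse (real (Suc k)) - inverse (x + real k)) sums (Digamma x + euler_mascheroni)"
    using summable_Digamma[OF nz0(1)] by (simp add: Digamma_def summable_sums)
  have s2: "(\<lambda>k. inverse (real (Suc k)) - inverse ((1 - x) + real k))
      sums (Digamma (1 - x) + euler_mascheroni)"
    using summable_Digamma[OF nz0(2)] by (simp add: Digamma_def summable_sums)
  have s3: "(\<lambda>k. inverse (x + real k) - inverse (x + real (Suc k)))
      sums (inverse (x + real 0) - 0)"
    by (intro telescope_sums' filterlim_compose[OF tendsto_inverse_0]
        tendsto_add_filterlim_at_infinity[OF tendsto_const] tendsto_of_nat)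
  from sums_add[OF sums_diff[OF s1 s2] s3]
  have "(\<lambda>k. inverse (1 - x + real k) - inverse (x + real (Suc k)))
      sums (Digamma x - Digamma (1 - x) + inverse x)"
    by (simp add: algebra_simps)
  also have "Digamma x - Digamma (1 - x) + inverse x = 1 / x - pi * cot (pi * x)"
    using Digamma_reflection_real[OF assms] by (simp add: field_simps)
  also have "(\<lambda>k. inverse (1 - x + real k) - inverse (x + real (Suc k)))
      = (\<lambda>k. 2 * x / ((real k + 1)\<^sup>2 - x\<^sup>2))"
  proof
    fix k
    have "inverse (1 - x + real k) - inverse (x + real (Suc k))
        = 2 * x / ((1 - x + real k) * (x + real (Suc k)))"
      using nz_k[of k] nz_k[of "Suc k"] by (simp add: field_simps)
    also have "(1 - x + real k) * (x + real (Suc k)) = (real k + 1)\<^sup>2 - x\<^sup>2"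
      by (simp add: power2_eq_square algebra_simps)
    finally show "inverse (1 - x + real k) - inverse (x + real (Suc k))
        = 2 * x / ((real k + 1)\<^sup>2 - x\<^sup>2)" .
  qed
  finally show ?thesis .
qed

lemma zeta_even_sums:
  assumes "m \<ge> 1"
  shows "(\<lambda>n. 1 / real (Suc n) ^ (2 * m)) sums zeta (real (2 * m))"
proof -
  have "summable (\<lambda>n. inverse (real n ^ (2 * m)))"
    using inverse_power_summable[of "2 * m"] assms by simp
  then have "summable (\<lambda>n. 1 / real (Suc n) ^ (2 * m))"
    by (subst (asm) summable_Suc_iff[symmetric]) (simp add: divide_inverse)
  moreover have "zeta (real (2 * m)) = (\<Sum>n. 1 / real (Suc n) ^ (2 * m))"
    using assms by (simp add: zeta_def powr_realpow del: of_nat_mult)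
  ultimately show ?thesis by (simp add: sums_iff)
qed

text \<open>Expand each term of the partial fraction series geometrically and swap the summations.\<close>

lemma sums_zeta_even_powers:
  fixes x :: real
  assumes "x \<noteq> 0" "\<bar>x\<bar> < 1"
  shows "(\<lambda>m. zeta (real (2 * Suc m)) * x ^ (2 * Suc m)) sums (1 / 2 - pi * x / 2 * cot (pi * x))"
proof -
  define f where "f = (\<lambda>(n, m). (x\<^sup>2 / (real n + 1)\<^sup>2) ^ Suc m)"
  define S where "S = 1 / 2 - pi * x / 2 * cot (pi * x)"
  have x2: "x\<^sup>2 < (real n + 1)\<^sup>2" for n
  proof -
    have "\<bar>x\<bar> < real n + 1"
      using assms(2) by linarith
    then have "\<bar>x\<bar>\<^sup>2 < (real n + 1)\<^sup>2"
      by (rule power_strict_mono) auto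
    then show ?thesis by simp
  qed
  have rows: "((\<lambda>m. f (n, m)) has_sum (x\<^sup>2 / ((real n + 1)\<^sup>2 - x\<^sup>2))) UNIV" for n
  proof -
    define q where "q = x\<^sup>2 / (real n + 1)\<^sup>2"
    have q: "0 \<le> q" "q < 1"
      using x2[of n] by (auto simp: q_def)
    have "(\<lambda>m. q * q ^ m) sums (q * (1 / (1 - q)))"
      by (intro sums_mult geometric_sums) (use q in auto)
    also have "q * (1 / (1 - q)) = x\<^sup>2 / ((real n + 1)\<^sup>2 - x\<^sup>2)"
      using x2[of n] by (simp add: q_def field_simps)
    finally have "(\<lambda>m. f (n, m)) sums (x\<^sup>2 / ((real n + 1)\<^sup>2 - x\<^sup>2))"
      by (simp add: f_def q_def)
    then show ?thesis
      by (rule sums_nonneg_imp_has_sum) (use q in \<open>auto simp: f_def q_def\<close>)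
  qed
  have "x \<notin> \<int>"
    using assms by (auto elim!: Ints_cases)
  from sums_mult[OF cot_partial_fractions[OF this], of "x / 2"]
  have "(\<lambda>n. x / 2 * (2 * x / ((real n + 1)\<^sup>2 - x\<^sup>2))) sums (x / 2 * (1 / x - pi * cot (pi * x)))" .
  also have "(\<lambda>n. x / 2 * (2 * x / ((real n + 1)\<^sup>2 - x\<^sup>2))) = (\<lambda>n. x\<^sup>2 / ((real n + 1)\<^sup>2 - x\<^sup>2))"
    by (simp add: power2_eq_square)
  also have "x / 2 * (1 / x - pi * cot (pi * x)) = S"
    using assms(1) by (simp add: S_def field_simps)
  finally have "(\<lambda>n. x\<^sup>2 / ((real n + 1)\<^sup>2 - x\<^sup>2)) sums S" .
  then have cols: "((\<lambda>n. x\<^sup>2 / ((real n + 1)\<^sup>2 - x\<^sup>2)) has_sum S) UNIV"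
    by (rule sums_nonneg_imp_has_sum) (use x2 in \<open>auto simp: less_imp_le\<close>)
  have "(f has_sum S) (UNIV \<times> UNIV)"
    by (intro has_sum_SigmaI[OF rows cols] summable_on_SigmaI[OF rows has_sum_imp_summable[OF cols]])
       (auto simp: f_def)
  then have swapped: "((\<lambda>(m, n). f (n, m)) has_sum S) (UNIV \<times> UNIV)"
    by (subst (asm) has_sum_swap)
  have cols: "((\<lambda>n. f (n, m)) has_sum (zeta (real (2 * Suc m)) * x ^ (2 * Suc m))) UNIV" for m
  proof -
    have "(\<lambda>n. x ^ (2 * Suc m) * (1 / real (Suc n) ^ (2 * Suc m)))
        sums (x ^ (2 * Suc m) * zeta (real (2 * Suc m)))"
      by (intro sums_mult zeta_even_sums) simp
    also have "(\<lambda>n. x ^ (2 * Suc m) * (1 / real (Suc n) ^ (2 * Suc m))) = (\<lambda>n. f (n, m))"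
      by (auto simp: f_def power_divide power_mult add.commute power2_eq_square mult.assoc)
    finally show ?thesis
      by (intro sums_nonneg_imp_has_sum) (auto simp: mult.commute f_def)
  qed
  have "((\<lambda>m. zeta (real (2 * Suc m)) * x ^ (2 * Suc m)) has_sum S) UNIV"
    using cols by (intro has_sum_SigmaD[OF swapped]) simp
  then show ?thesis
    unfolding S_def by (rule has_sum_imp_sums)
qed

definition zeta_even_gf :: "real \<Rightarrow> real" where
  "zeta_even_gf y = (if y = 0 then - 1 / 2 else - (y / 4) * cot (y / 2))"

lemma sums_zeta_even_gf:
  fixes y :: real
  assumes "\<bar>y\<bar> < 2 * pi"
  shows "(\<lambda>m. zeta (real (2 * m)) * (y / (2 * pi)) ^ (2 * m)) sums zeta_even_gf y"
proof (cases "y = 0")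
  case True
  then have "(\<lambda>m. zeta (real (2 * m)) * (y / (2 * pi)) ^ (2 * m)) = (\<lambda>m. if m = 0 then - 1 / 2 else 0)"
    by (auto simp: zeta_def)
  then show ?thesis
    using True sums_single[of 0 "\<lambda>_. - 1 / 2 :: real"] by (simp add: zeta_even_gf_def)
next
  case False
  define x where "x = y / (2 * pi)"
  have "x \<noteq> 0" "\<bar>x\<bar> < 1"
    using False assms by (auto simp: x_def abs_divide)
  from sums_zeta_even_powers[OF this]
  have "(\<lambda>m. zeta (real (2 * m)) * x ^ (2 * m))
      sums (1 / 2 - pi * x / 2 * cot (pi * x) + zeta (real (2 * 0)) * x ^ (2 * 0))"
    by (subst (asm) sums_Suc_iff)
  also have "1 / 2 - pi * x / 2 * cot (pi * x) + zeta (real (2 * 0)) * x ^ (2 * 0) = zeta_even_gf y"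
    using False by (simp add: x_def zeta_def zeta_even_gf_def)
  finally show ?thesis
    unfolding x_def .
qed

section \<open>Uniqueness of real power series expansions\<close>

text \<open>The library's uniqueness theorem for expansions (eval_fps_eqD) covers complex power
  series only; for real ones, divide by the lowest power of x and use continuity at 0.\<close>

lemma has_fps_expansion_zero_imp_eq_0:
  fixes H :: "'a :: {banach, real_normed_field} fps"
  assumes "(\<lambda>_. 0) has_fps_expansion H"
  shows "H = 0"
proof (rule ccontr)
  assume "H \<noteq> 0"
  define k where "k = subdegree H"
  define E where "E = fps_shift k H"
  have radius: "fps_conv_radius H > 0"
    using assms by (simp add: has_fps_expansion_def)
  have "eventually (\<lambda>x. x \<in> eball 0 (fps_conv_radius H)) (nhds 0)"
    using radius by (intro eventually_nhds_in_open) (auto simp: zero_ereal_def)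
  moreover have "eventually (\<lambda>x. eval_fps H x = 0) (nhds 0)"
    using assms by (simp add: has_fps_expansion_def)
  ultimately have "eventually (\<lambda>x. eval_fps E x = 0) (at 0)"
    unfolding eventually_at_filter
    by eventually_elim (simp add: E_def k_def eval_fps_shift)
  then have "(eval_fps E \<longlongrightarrow> 0) (at 0)"
    by (simp add: tendsto_eventually)
  moreover have "isCont (eval_fps E) 0"
    using radius by (intro continuous_eval_fps) (simp add: E_def flip: zero_ereal_def)
  then have "(eval_fps E \<longlongrightarrow> eval_fps E 0) (at 0)"
    by (simp add: isCont_def)
  ultimately have "eval_fps E 0 = 0"
    using tendsto_unique[OF at_neq_bot] by blast
  with \<open>H \<noteq> 0\<close> show False
    by (simp add: E_def k_def eval_fps_at_0)
qed

lemma has_fps_expansion_unique: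
  fixes F G :: "'a :: {banach, real_normed_field} fps"
  assumes "f has_fps_expansion F" "f has_fps_expansion G"
  shows "F = G"
proof -
  have "(\<lambda>x. f x - f x) has_fps_expansion F - G"
    using assms by (rule has_fps_expansion_diff)
  then have "F - G = 0"
    by (intro has_fps_expansion_zero_imp_eq_0) simp
  then show ?thesis by simp
qed

lemma has_fps_expansion_eventually_eq_imp_eq:
  fixes F G :: "'a :: {banach, real_normed_field} fps"
  assumes "f has_fps_expansion F" "g has_fps_expansion G" "eventually (\<lambda>x. f x = g x) (nhds 0)"
  shows "F = G"
proof (rule has_fps_expansion_unique[OF assms(1)])
  show "f has_fps_expansion G"
    using assms(2,3) unfolding has_fps_expansion_def by (auto elim: eventually_elim2)
qed

lemma eventually_abs_less_nhds_0:
  fixes r :: real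
  assumes "r > 0"
  shows "eventually (\<lambda>x. \<bar>x\<bar> < r) (nhds 0)"
  unfolding eventually_nhds_metric using assms by (auto simp: dist_real_def)

definition zeta_even_fps :: "real \<Rightarrow> real fps" where
  "zeta_even_fps c = Abs_fps (\<lambda>n. if even n then zeta (real n) * (c / (2 * pi)) ^ n else 0)"

lemma fps_nth_zeta_even_fps_even:
  "fps_nth (zeta_even_fps c) (2 * m) = zeta (real (2 * m)) * (c / (2 * pi)) ^ (2 * m)"
  by (simp add: zeta_even_fps_def)

lemma fps_nth_zeta_even_fps_odd: "odd n \<Longrightarrow> fps_nth (zeta_even_fps c) n = 0"
  by (simp add: zeta_even_fps_def)

lemma sums_zeta_even_fps:
  assumes "\<bar>c * x\<bar> < 2 * pi"
  shows "(\<lambda>n. fps_nth (zeta_even_fps c) n * x ^ n) sums zeta_even_gf (c * x)"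
proof -
  have "(\<lambda>m. zeta (real (2 * m)) * (c * x / (2 * pi)) ^ (2 * m)) sums zeta_even_gf (c * x)"
    by (rule sums_zeta_even_gf[OF assms])
  also have "(\<lambda>m. zeta (real (2 * m)) * (c * x / (2 * pi)) ^ (2 * m))
      = (\<lambda>m. fps_nth (zeta_even_fps c) (2 * m) * x ^ (2 * m))"
    by (simp add: fps_nth_zeta_even_fps_even power_mult_distrib power_divide mult.assoc)
  finally have "(\<lambda>m. (\<lambda>n. fps_nth (zeta_even_fps c) n * x ^ n) (2 * m)) sums zeta_even_gf (c * x)" .
  moreover have "strict_mono (\<lambda>m::nat. 2 * m)"
    by (simp add: strict_mono_def)
  moreover have "fps_nth (zeta_even_fps c) n * x ^ n = 0" if "n \<notin> range (\<lambda>m. 2 * m)" for n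
  proof -
    have "odd n"
      using that by (auto elim!: evenE)
    then show ?thesis
      by (simp add: fps_nth_zeta_even_fps_odd)
  qed
  ultimately show ?thesis
    using sums_mono_reindex[of "\<lambda>m. 2 * m" "\<lambda>n. fps_nth (zeta_even_fps c) n * x ^ n"] by blast
qed

lemma has_fps_expansion_zeta_even_gf [fps_expansion_intros]:
  "(\<lambda>x. zeta_even_gf (c * x)) has_fps_expansion zeta_even_fps c"
proof -
  define r where "r = pi / (\<bar>c\<bar> + 1)"
  have r: "r > 0"
    by (simp add: r_def add_pos_nonneg)
  have small: "\<bar>c * x\<bar> < 2 * pi" if "\<bar>x\<bar> \<le> r" for x
  proof -
    have "\<bar>c * x\<bar> \<le> \<bar>c\<bar> * r"
      using that by (simp add: abs_mult mult_left_mono)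
    also have "\<bar>c\<bar> * r < pi"
      by (simp add: r_def field_simps)
    finally show ?thesis by simp
  qed
  have "0 < ereal r"
    using r by simp
  also have "ereal r \<le> fps_conv_radius (zeta_even_fps c)"
    using conv_radius_geI[OF sums_summable[OF sums_zeta_even_fps[OF small]], of r] r
    by (simp add: fps_conv_radius_def)
  finally have radius: "fps_conv_radius (zeta_even_fps c) > 0" .
  from eventually_abs_less_nhds_0[OF r]
  have "eventually (\<lambda>x. eval_fps (zeta_even_fps c) x = zeta_even_gf (c * x)) (nhds 0)"
    by eventually_elim (simp add: eval_fps_def sums_unique[OF sums_zeta_even_fps[OF small]])
  with radius show ?thesis
    by (simp add: has_fps_expansion_def)
qed

section \<open>Cotangent identities\<close>

lemma cot_diff:
  fixes u v :: real
  assumes "sin u \<noteq> 0" "sin v \<noteq> 0"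
  shows "cot u - cot v = sin (v - u) / (sin u * sin v)"
  using assms by (simp add: cot_def sin_diff field_simps)

lemma sin_plus_cos_mult_cot:
  fixes v w :: real
  assumes "sin v \<noteq> 0"
  shows "sin w + cos w * cot v = cos (v - w) / sin v"
  using assms by (simp add: cot_def cos_diff field_simps)

lemma cot_minus_cot_double:
  fixes t :: real
  assumes "sin (2 * t) \<noteq> 0"
  shows "cot t - cot (2 * t) = 1 / sin (2 * t)"
proof -
  have "sin t \<noteq> 0"
    using assms by (auto simp: sin_double)
  with assms show ?thesis
    by (simp add: cot_diff)
qed

lemma cot_eq_one_plus_cos_double_div:
  fixes t :: real
  assumes "sin (2 * t) \<noteq> 0"
  shows "cot t = (1 + cos (2 * t)) / sin (2 * t)"
proof -
  have "sin t \<noteq> 0" "cos t \<noteq> 0"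
    using assms by (auto simp: sin_double)
  then show ?thesis
    unfolding sin_double cos_double_cos by (simp add: cot_def field_simps power2_eq_square)
qed

lemma cot_identity_3:
  fixes u :: real
  assumes "sin u \<noteq> 0" "sin (3 * u) \<noteq> 0"
  shows "cot u - cot (3 * u) = 2 * (sin (2 * u) + cos (2 * u) * cot (3 * u))"
proof -
  have "cot u - cot (3 * u) = sin (2 * u) / (sin u * sin (3 * u))"
    using assms by (simp add: cot_diff)
  also have "\<dots> = 2 * cos u / sin (3 * u)"
    using assms(1) by (simp add: sin_double)
  finally show ?thesis
    using sin_plus_cos_mult_cot[OF assms(2), of "2 * u"] by simp
qed

lemma cot_identity_4:
  fixes u :: real
  assumes "sin (4 * u) \<noteq> 0"
  shows "cot u - cot (2 * u) = 2 * (sin (2 * u) + cos (2 * u) * cot (4 * u))"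
proof -
  have "sin (4 * u) = 2 * sin (2 * u) * cos (2 * u)"
    using sin_double[of "2 * u"] by simp
  with assms have "sin (2 * u) \<noteq> 0" "cos (2 * u) \<noteq> 0"
    by auto
  then have "cot u - cot (2 * u) = 2 * cos (2 * u) / sin (4 * u)"
    using \<open>sin (4 * u) = _\<close> by (simp add: cot_minus_cot_double)
  then show ?thesis
    using sin_plus_cos_mult_cot[OF assms, of "2 * u"] by simp
qed

lemma cot_identity_6:
  fixes u :: real
  assumes "sin (2 * u) \<noteq> 0" "sin (6 * u) \<noteq> 0"
  shows "cot u - cot (2 * u) - cot (3 * u) + cot (6 * u)
    = 2 * (sin (2 * u) + cos (2 * u) * cot (6 * u))"
proof -
  have "cot u - cot (2 * u) - (cot (3 * u) - cot (2 * (3 * u)))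
      = 1 / sin (2 * u) - 1 / sin (6 * u)"
    using assms cot_minus_cot_double[of u] cot_minus_cot_double[of "3 * u"] by simp
  also have "\<dots> = (sin (6 * u) - sin (2 * u)) / (sin (2 * u) * sin (6 * u))"
    using assms by (simp add: field_simps)
  also have "sin (6 * u) - sin (2 * u) = 2 * sin (2 * u) * cos (4 * u)"
    using sin_diff_sin[of "6 * u" "2 * u"] by simp
  also have "2 * sin (2 * u) * cos (4 * u) / (sin (2 * u) * sin (6 * u))
      = 2 * cos (4 * u) / sin (6 * u)"
    using assms(1) by simp
  finally show ?thesis
    using sin_plus_cos_mult_cot[OF assms(2), of "2 * u"] by simp
qed

lemma cot_identity_double_angle:
  fixes u v :: real
  assumes "sin (2 * v) \<noteq> 0"
  shows "sin (2 * v + u) + cot (2 * v) * (cos u + cos (2 * v + u)) = cot v * cos u"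
proof -
  have "sin (2 * v + u) + cot (2 * v) * (cos u + cos (2 * v + u))
      = (sin (2 * v + u) + cos (2 * v + u) * cot (2 * v)) + cos u * cot (2 * v)"
    by (simp add: algebra_simps)
  also have "sin (2 * v + u) + cos (2 * v + u) * cot (2 * v) = cos u / sin (2 * v)"
    using sin_plus_cos_mult_cot[OF assms, of "2 * v + u"] by simp
  also have "cos u / sin (2 * v) + cos u * cot (2 * v) = cos u * (1 + cos (2 * v)) / sin (2 * v)"
    by (simp add: cot_def add_divide_distrib algebra_simps)
  also have "\<dots> = cot v * cos u"
    using cot_eq_one_plus_cos_double_div[OF assms] by simp
  finally show ?thesis .
qed

lemma zeta_even_gf_identity_3:
  fixes x :: real
  assumes "\<bar>x\<bar> < pi"
  shows "3 * zeta_even_gf (x / 3) - zeta_even_gf x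
    = - x / 2 * sin (x / 3) + 2 * cos (x / 3) * zeta_even_gf x"
proof (cases "x = 0")
  case False
  define u where "u = x / 6"
  have "sin u \<noteq> 0" "sin (3 * u) \<noteq> 0"
    using False assms by (simp_all add: u_def sin_zero_pi_iff)
  then have cot: "cot u - cot (3 * u) = 2 * (sin (2 * u) + cos (2 * u) * cot (3 * u))"
    by (rule cot_identity_3)
  have "3 * zeta_even_gf (x / 3) - zeta_even_gf x = - (x / 4) * (cot u - cot (3 * u))"
    using False by (simp add: zeta_even_gf_def u_def algebra_simps)
  also have "\<dots> = - x / 2 * sin (x / 3) + 2 * cos (x / 3) * zeta_even_gf x"
    unfolding cot using False by (simp add: zeta_even_gf_def u_def algebra_simps)
  finally show ?thesis .
qed (simp add: zeta_even_gf_def)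

lemma zeta_even_gf_identity_4:
  fixes x :: real
  assumes "\<bar>x\<bar> < pi"
  shows "4 * zeta_even_gf (x / 4) - 2 * zeta_even_gf (x / 2)
    = - x / 2 * sin (x / 4) + 2 * cos (x / 4) * zeta_even_gf x"
proof (cases "x = 0")
  case False
  define u where "u = x / 8"
  have "sin (4 * u) \<noteq> 0"
    using False assms by (simp add: u_def sin_zero_pi_iff)
  then have cot: "cot u - cot (2 * u) = 2 * (sin (2 * u) + cos (2 * u) * cot (4 * u))"
    by (rule cot_identity_4)
  have "4 * zeta_even_gf (x / 4) - 2 * zeta_even_gf (x / 2) = - (x / 4) * (cot u - cot (2 * u))"
    using False by (simp add: zeta_even_gf_def u_def algebra_simps)
  also have "\<dots> = - x / 2 * sin (x / 4) + 2 * cos (x / 4) * zeta_even_gf x"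
    unfolding cot using False by (simp add: zeta_even_gf_def u_def algebra_simps)
  finally show ?thesis .
qed (simp add: zeta_even_gf_def)

lemma zeta_even_gf_identity_6:
  fixes x :: real
  assumes "\<bar>x\<bar> < pi"
  shows "6 * zeta_even_gf (x / 6) - 3 * zeta_even_gf (x / 3) - 2 * zeta_even_gf (x / 2) + zeta_even_gf x
    = - x / 2 * sin (x / 6) + 2 * cos (x / 6) * zeta_even_gf x"
proof (cases "x = 0")
  case False
  define u where "u = x / 12"
  have "sin (2 * u) \<noteq> 0" "sin (6 * u) \<noteq> 0"
    using False assms by (simp_all add: u_def sin_zero_pi_iff)
  then have cot: "cot u - cot (2 * u) - cot (3 * u) + cot (6 * u)
      = 2 * (sin (2 * u) + cos (2 * u) * cot (6 * u))"
    by (rule cot_identity_6)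
  have "6 * zeta_even_gf (x / 6) - 3 * zeta_even_gf (x / 3) - 2 * zeta_even_gf (x / 2) + zeta_even_gf x
      = - (x / 4) * (cot u - cot (2 * u) - cot (3 * u) + cot (6 * u))"
    using False by (simp add: zeta_even_gf_def u_def algebra_simps)
  also have "\<dots> = - x / 2 * sin (x / 6) + 2 * cos (x / 6) * zeta_even_gf x"
    unfolding cot using False by (simp add: zeta_even_gf_def u_def algebra_simps)
  finally show ?thesis .
qed (simp add: zeta_even_gf_def)

lemma zeta_even_gf_half_identity:
  fixes x y :: real
  assumes "\<bar>x\<bar> < 2 * pi"
  shows "x / 2 * sin (x / 2 + y) - 2 * zeta_even_gf x * (cos y + cos (x / 2 + y))
    = - 4 * cos y * zeta_even_gf (x / 2)"
proof (cases "x = 0")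
  case False
  have "sin (2 * (x / 4)) \<noteq> 0"
    using False assms by (simp add: sin_zero_pi_iff)
  from cot_identity_double_angle[OF this, of y]
  have cot: "sin (x / 2 + y) + cot (x / 2) * (cos y + cos (x / 2 + y)) = cot (x / 4) * cos y"
    by simp
  have "x / 2 * sin (x / 2 + y) - 2 * zeta_even_gf x * (cos y + cos (x / 2 + y))
      = x / 2 * (sin (x / 2 + y) + cot (x / 2) * (cos y + cos (x / 2 + y)))"
    using False by (simp add: zeta_even_gf_def algebra_simps)
  also have "\<dots> = - 4 * cos y * zeta_even_gf (x / 2)"
    unfolding cot using False by (simp add: zeta_even_gf_def)
  finally show ?thesis .
qed (simp add: zeta_even_gf_def)

lemma zeta_even_gf_identity_12:
  fixes x :: real
  assumes "\<bar>x\<bar> < pi"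
  shows "x / 2 * (sin (x / 12) + sin (7 * x / 12))
      - 2 * zeta_even_gf x * (cos (x / 12) + cos (7 * x / 12))
    = - 2 * (6 * zeta_even_gf (x / 12) - 3 * zeta_even_gf (x / 6) - 2 * zeta_even_gf (x / 4)
      + zeta_even_gf (x / 2))"
proof -
  have "\<bar>x / 2\<bar> < pi" "\<bar>x\<bar> < 2 * pi"
    using assms by auto
  from zeta_even_gf_identity_6[OF this(1)] zeta_even_gf_half_identity[OF this(2), of "x / 12"]
  show ?thesis
    by (simp add: algebra_simps)
qed

lemma zeta_even_gf_identity_8:
  fixes x :: real
  assumes "\<bar>x\<bar> < pi"
  shows "x / 2 * (sin (x / 8) + sin (5 * x / 8))
      - 2 * zeta_even_gf x * (cos (x / 8) + cos (5 * x / 8))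
    = - 2 * (4 * zeta_even_gf (x / 8) - 2 * zeta_even_gf (x / 4))"
proof -
  have "\<bar>x / 2\<bar> < pi" "\<bar>x\<bar> < 2 * pi"
    using assms by auto
  from zeta_even_gf_identity_4[OF this(1)] zeta_even_gf_half_identity[OF this(2), of "x / 8"]
  show ?thesis
    by (simp add: algebra_simps)
qed

lemma zeta_even_fps_identity_3:
  "fps_const 3 * zeta_even_fps (1 / 3) - zeta_even_fps 1
    = fps_const (- 1 / 2) * (fps_X * fps_sin (1 / 3)) + fps_const 2 * (fps_cos (1 / 3) * zeta_even_fps 1)"
proof (rule has_fps_expansion_eventually_eq_imp_eq)
  show "(\<lambda>x. 3 * zeta_even_gf (1 / 3 * x) - zeta_even_gf (1 * x))
      has_fps_expansion fps_const 3 * zeta_even_fps (1 / 3) - zeta_even_fps 1"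
    by (intro fps_expansion_intros)
  show "(\<lambda>x. - 1 / 2 * (x * sin (1 / 3 * x)) + 2 * (cos (1 / 3 * x) * zeta_even_gf (1 * x)))
      has_fps_expansion fps_const (- 1 / 2) * (fps_X * fps_sin (1 / 3)) + fps_const 2 * (fps_cos (1 / 3) * zeta_even_fps 1)"
    by (intro fps_expansion_intros)
  show "eventually (\<lambda>x. 3 * zeta_even_gf (1 / 3 * x) - zeta_even_gf (1 * x)
      = - 1 / 2 * (x * sin (1 / 3 * x)) + 2 * (cos (1 / 3 * x) * zeta_even_gf (1 * x))) (nhds 0)"
    using eventually_abs_less_nhds_0[OF pi_gt_zero]
    by eventually_elim (drule zeta_even_gf_identity_3, simp add: algebra_simps)
qed

lemma zeta_even_fps_identity_4:
  "fps_const 4 * zeta_even_fps (1 / 4) - fps_const 2 * zeta_even_fps (1 / 2)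
    = fps_const (- 1 / 2) * (fps_X * fps_sin (1 / 4)) + fps_const 2 * (fps_cos (1 / 4) * zeta_even_fps 1)"
proof (rule has_fps_expansion_eventually_eq_imp_eq)
  show "(\<lambda>x. 4 * zeta_even_gf (1 / 4 * x) - 2 * zeta_even_gf (1 / 2 * x))
      has_fps_expansion fps_const 4 * zeta_even_fps (1 / 4) - fps_const 2 * zeta_even_fps (1 / 2)"
    by (intro fps_expansion_intros)
  show "(\<lambda>x. - 1 / 2 * (x * sin (1 / 4 * x)) + 2 * (cos (1 / 4 * x) * zeta_even_gf (1 * x)))
      has_fps_expansion fps_const (- 1 / 2) * (fps_X * fps_sin (1 / 4)) + fps_const 2 * (fps_cos (1 / 4) * zeta_even_fps 1)"
    by (intro fps_expansion_intros)
  show "eventually (\<lambda>x. 4 * zeta_even_gf (1 / 4 * x) - 2 * zeta_even_gf (1 / 2 * x)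
      = - 1 / 2 * (x * sin (1 / 4 * x)) + 2 * (cos (1 / 4 * x) * zeta_even_gf (1 * x))) (nhds 0)"
    using eventually_abs_less_nhds_0[OF pi_gt_zero]
    by eventually_elim (drule zeta_even_gf_identity_4, simp add: algebra_simps)
qed

lemma zeta_even_fps_identity_6:
  "fps_const 6 * zeta_even_fps (1 / 6) - fps_const 3 * zeta_even_fps (1 / 3)
      - fps_const 2 * zeta_even_fps (1 / 2) + zeta_even_fps 1
    = fps_const (- 1 / 2) * (fps_X * fps_sin (1 / 6)) + fps_const 2 * (fps_cos (1 / 6) * zeta_even_fps 1)"
proof (rule has_fps_expansion_eventually_eq_imp_eq)
  show "(\<lambda>x. 6 * zeta_even_gf (1 / 6 * x) - 3 * zeta_even_gf (1 / 3 * x)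
        - 2 * zeta_even_gf (1 / 2 * x) + zeta_even_gf (1 * x))
      has_fps_expansion fps_const 6 * zeta_even_fps (1 / 6) - fps_const 3 * zeta_even_fps (1 / 3)
        - fps_const 2 * zeta_even_fps (1 / 2) + zeta_even_fps 1"
    by (intro fps_expansion_intros)
  show "(\<lambda>x. - 1 / 2 * (x * sin (1 / 6 * x)) + 2 * (cos (1 / 6 * x) * zeta_even_gf (1 * x)))
      has_fps_expansion fps_const (- 1 / 2) * (fps_X * fps_sin (1 / 6)) + fps_const 2 * (fps_cos (1 / 6) * zeta_even_fps 1)"
    by (intro fps_expansion_intros)
  show "eventually (\<lambda>x. 6 * zeta_even_gf (1 / 6 * x) - 3 * zeta_even_gf (1 / 3 * x)
        - 2 * zeta_even_gf (1 / 2 * x) + zeta_even_gf (1 * x)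
      = - 1 / 2 * (x * sin (1 / 6 * x)) + 2 * (cos (1 / 6 * x) * zeta_even_gf (1 * x))) (nhds 0)"
    using eventually_abs_less_nhds_0[OF pi_gt_zero]
    by eventually_elim (drule zeta_even_gf_identity_6, simp add: algebra_simps)
qed

lemma zeta_even_fps_identity_12:
  "fps_const (1 / 2) * (fps_X * fps_sin (1 / 12)) + fps_const (1 / 2) * (fps_X * fps_sin (7 / 12))
      - fps_const 2 * (fps_cos (1 / 12) * zeta_even_fps 1) - fps_const 2 * (fps_cos (7 / 12) * zeta_even_fps 1)
    = fps_const (- 2) * (fps_const 6 * zeta_even_fps (1 / 12) - fps_const 3 * zeta_even_fps (1 / 6)
      - fps_const 2 * zeta_even_fps (1 / 4) + zeta_even_fps (1 / 2))"
proof (rule has_fps_expansion_eventually_eq_imp_eq)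
  show "(\<lambda>x. 1 / 2 * (x * sin (1 / 12 * x)) + 1 / 2 * (x * sin (7 / 12 * x))
        - 2 * (cos (1 / 12 * x) * zeta_even_gf (1 * x)) - 2 * (cos (7 / 12 * x) * zeta_even_gf (1 * x)))
      has_fps_expansion fps_const (1 / 2) * (fps_X * fps_sin (1 / 12)) + fps_const (1 / 2) * (fps_X * fps_sin (7 / 12))
        - fps_const 2 * (fps_cos (1 / 12) * zeta_even_fps 1) - fps_const 2 * (fps_cos (7 / 12) * zeta_even_fps 1)"
    by (intro fps_expansion_intros)
  show "(\<lambda>x. - 2 * (6 * zeta_even_gf (1 / 12 * x) - 3 * zeta_even_gf (1 / 6 * x)
        - 2 * zeta_even_gf (1 / 4 * x) + zeta_even_gf (1 / 2 * x)))
      has_fps_expansion fps_const (- 2) * (fps_const 6 * zeta_even_fps (1 / 12) - fps_const 3 * zeta_even_fps (1 / 6)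
        - fps_const 2 * zeta_even_fps (1 / 4) + zeta_even_fps (1 / 2))"
    by (intro fps_expansion_intros)
  show "eventually (\<lambda>x. 1 / 2 * (x * sin (1 / 12 * x)) + 1 / 2 * (x * sin (7 / 12 * x))
        - 2 * (cos (1 / 12 * x) * zeta_even_gf (1 * x)) - 2 * (cos (7 / 12 * x) * zeta_even_gf (1 * x))
      = - 2 * (6 * zeta_even_gf (1 / 12 * x) - 3 * zeta_even_gf (1 / 6 * x)
        - 2 * zeta_even_gf (1 / 4 * x) + zeta_even_gf (1 / 2 * x))) (nhds 0)"
    using eventually_abs_less_nhds_0[OF pi_gt_zero]
    by eventually_elim (drule zeta_even_gf_identity_12, simp add: algebra_simps)
qed

lemma zeta_even_fps_identity_8:
  "fps_const (1 / 2) * (fps_X * fps_sin (1 / 8)) + fps_const (1 / 2) * (fps_X * fps_sin (5 / 8))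
      - fps_const 2 * (fps_cos (1 / 8) * zeta_even_fps 1) - fps_const 2 * (fps_cos (5 / 8) * zeta_even_fps 1)
    = fps_const (- 2) * (fps_const 4 * zeta_even_fps (1 / 8) - fps_const 2 * zeta_even_fps (1 / 4))"
proof (rule has_fps_expansion_eventually_eq_imp_eq)
  show "(\<lambda>x. 1 / 2 * (x * sin (1 / 8 * x)) + 1 / 2 * (x * sin (5 / 8 * x))
        - 2 * (cos (1 / 8 * x) * zeta_even_gf (1 * x)) - 2 * (cos (5 / 8 * x) * zeta_even_gf (1 * x)))
      has_fps_expansion fps_const (1 / 2) * (fps_X * fps_sin (1 / 8)) + fps_const (1 / 2) * (fps_X * fps_sin (5 / 8))
        - fps_const 2 * (fps_cos (1 / 8) * zeta_even_fps 1) - fps_const 2 * (fps_cos (5 / 8) * zeta_even_fps 1)"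
    by (intro fps_expansion_intros)
  show "(\<lambda>x. - 2 * (4 * zeta_even_gf (1 / 8 * x) - 2 * zeta_even_gf (1 / 4 * x)))
      has_fps_expansion fps_const (- 2) * (fps_const 4 * zeta_even_fps (1 / 8) - fps_const 2 * zeta_even_fps (1 / 4))"
    by (intro fps_expansion_intros)
  show "eventually (\<lambda>x. 1 / 2 * (x * sin (1 / 8 * x)) + 1 / 2 * (x * sin (5 / 8 * x))
        - 2 * (cos (1 / 8 * x) * zeta_even_gf (1 * x)) - 2 * (cos (5 / 8 * x) * zeta_even_gf (1 * x))
      = - 2 * (4 * zeta_even_gf (1 / 8 * x) - 2 * zeta_even_gf (1 / 4 * x))) (nhds 0)"
    using eventually_abs_less_nhds_0[OF pi_gt_zero]
    by eventually_elim (drule zeta_even_gf_identity_8, simp add: algebra_simps)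
qed

section \<open>Comparing coefficients\<close>

lemma sum_upto_double_eq_sum_even:
  fixes f :: "nat \<Rightarrow> 'a :: comm_monoid_add"
  assumes "\<And>i. odd i \<Longrightarrow> f i = 0"
  shows "(\<Sum>i = 0..2 * j. f i) = (\<Sum>m = 0..j. f (2 * m))"
proof (induction j)
  case (Suc j)
  have "(\<Sum>i = 0..2 * Suc j. f i) = (\<Sum>i = 0..2 * j. f i) + f (Suc (2 * j)) + f (2 * Suc j)"
    by (simp add: sum.atLeast0_atMost_Suc)
  with Suc.IH show ?case
    by (simp add: assms sum.atLeast0_atMost_Suc)
qed simp

lemma two_powi_double_minus_one: "(2::real) powi (2 * int m - 1) = 2 ^ (2 * m) / 2"
proof -
  have "(2::real) powi (int (2 * m) - 1) = 2 powi int (2 * m) / 2 powi 1"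
    by (rule power_int_diff) simp
  moreover have "2 * int m - 1 = int (2 * m) - 1"
    by simp
  ultimately show ?thesis
    by (simp only: power_int_of_nat power_int_1_right)
qed

lemma powi_one_minus_double:
  fixes a :: real
  assumes "a \<noteq> 0"
  shows "a powi (1 - 2 * int j) = a / a ^ (2 * j)"
proof -
  have "a powi (1 - int (2 * j)) = a powi 1 / a powi int (2 * j)"
    by (rule power_int_diff) (use assms in auto)
  moreover have "1 - 2 * int j = 1 - int (2 * j)"
    by simp
  ultimately show ?thesis
    by (simp only: power_int_of_nat power_int_1_right)
qed

lemma fps_nth_X_mult_sin:
  fixes c :: real
  assumes "j \<ge> 1"
  shows "fps_nth (fps_X * fps_sin c) (2 * j) = (-1) ^ (j + 1) * real (2 * j) * c ^ (2 * j - 1) / fact (2 * j)"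
proof -
  obtain k where k: "j = Suc k"
    using assms by (cases j) auto
  have "2 * j - 1 = Suc (2 * k)"
    using k by simp
  then have "fps_nth (fps_X * fps_sin c) (2 * j) = (-1) ^ (j + 1) * c ^ (2 * j - 1) / fact (2 * j - 1)"
    using k by (simp add: fps_sin_def fps_X_mult_nth del: fact_Suc)
  also have "\<dots> = (-1) ^ (j + 1) * real (2 * j) * c ^ (2 * j - 1) / fact (2 * j)"
    using assms by (simp add: fact_reduce[where n = "2 * j"] del: of_nat_mult)
  finally show ?thesis .
qed

lemma fps_nth_cos_mult_zeta_even_fps:
  fixes c :: real
  shows "fps_nth (fps_cos c * zeta_even_fps 1) (2 * j)
    = (-1) ^ (j + 1) / 2 * (\<Sum>m = 0..j. (-1) ^ (m + 1) * c ^ (2 * j - 2 * m)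
        / (fact (2 * j - 2 * m) * (2::real) powi (2 * int m - 1) * pi ^ (2 * m)) * zeta (real (2 * m)))"
proof -
  have "fps_nth (fps_cos c * zeta_even_fps 1) (2 * j)
      = (\<Sum>i = 0..2 * j. fps_nth (zeta_even_fps 1) i * fps_nth (fps_cos c) (2 * j - i))"
    by (simp add: fps_mult_nth mult.commute[of "fps_cos c"])
  also have "\<dots> = (\<Sum>m = 0..j. fps_nth (zeta_even_fps 1) (2 * m) * fps_nth (fps_cos c) (2 * j - 2 * m))"
    by (rule sum_upto_double_eq_sum_even) (simp add: fps_nth_zeta_even_fps_odd)
  also have "\<dots> = (-1) ^ (j + 1) / 2 * (\<Sum>m = 0..j. (-1) ^ (m + 1) * c ^ (2 * j - 2 * m)
        / (fact (2 * j - 2 * m) * (2::real) powi (2 * int m - 1) * pi ^ (2 * m)) * zeta (real (2 * m)))"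
    unfolding sum_distrib_left
  proof (rule sum.cong)
    fix m assume "m \<in> {0..j}"
    then have "(-1::real) ^ (j - m) = (-1) ^ (j + 1) * (-1) ^ (m + 1)"
      by (simp flip: neg_one_power_add_eq_neg_one_power_diff power_add)
    moreover have "2 * j - 2 * m = 2 * (j - m)"
      by simp
    ultimately show "fps_nth (zeta_even_fps 1) (2 * m) * fps_nth (fps_cos c) (2 * j - 2 * m)
      = (-1) ^ (j + 1) / 2 * ((-1) ^ (m + 1) * c ^ (2 * j - 2 * m)
        / (fact (2 * j - 2 * m) * (2::real) powi (2 * int m - 1) * pi ^ (2 * m)) * zeta (real (2 * m)))"
      by (simp add: fps_nth_zeta_even_fps_even fps_cos_def two_powi_double_minus_one
          power_mult_distrib power_divide)
         (simp add: ac_simps)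
  qed simp
  finally show ?thesis .
qed

lemma fps_nth_zeta_even_fps_half:
  "fps_nth (zeta_even_fps (c / 2)) n = (1 / 2) ^ n * fps_nth (zeta_even_fps c) n"
  by (simp add: zeta_even_fps_def power_divide) (simp flip: power_mult_distrib)

lemma fps_nth_zeta_even_fps_scaled:
  fixes d :: real
  assumes "d \<noteq> 0"
  shows "fps_nth (fps_const d * zeta_even_fps (1 / d)) (2 * j)
    = d powi (1 - 2 * int j) * zeta (real (2 * j)) / (2 * pi) ^ (2 * j)"
  using assms by (simp add: fps_nth_zeta_even_fps_even powi_one_minus_double power_divide power_mult_distrib)

lemma fps_nth_zeta_even_combination_3:
  "fps_nth (fps_const 3 * zeta_even_fps (1 / 3) - zeta_even_fps 1) (2 * j)
    = ((3::real) powi (1 - 2 * int j) - 1) * zeta (real (2 * j)) / (2 * pi) ^ (2 * j)"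
  unfolding fps_sub_nth fps_nth_zeta_even_fps_scaled[OF numeral_neq_zero]
    fps_nth_zeta_even_fps_even[of 1]
  by (simp add: power_divide diff_divide_distrib algebra_simps)

lemma fps_nth_zeta_even_combination_4:
  "fps_nth (fps_const 4 * zeta_even_fps (1 / 4) - fps_const 2 * zeta_even_fps (1 / 2)) (2 * j)
    = ((4::real) powi (1 - 2 * int j) - 2 powi (1 - 2 * int j)) * zeta (real (2 * j)) / (2 * pi) ^ (2 * j)"
  unfolding fps_sub_nth fps_nth_zeta_even_fps_scaled[OF numeral_neq_zero]
  by (simp add: diff_divide_distrib algebra_simps)

lemma fps_nth_zeta_even_combination_6:
  "fps_nth (fps_const 6 * zeta_even_fps (1 / 6) - fps_const 3 * zeta_even_fps (1 / 3)
      - fps_const 2 * zeta_even_fps (1 / 2) + zeta_even_fps 1) (2 * j)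
    = ((6::real) powi (1 - 2 * int j) - 3 powi (1 - 2 * int j) - 2 powi (1 - 2 * int j) + 1)
      * zeta (real (2 * j)) / (2 * pi) ^ (2 * j)"
  unfolding fps_sub_nth fps_add_nth fps_nth_zeta_even_fps_scaled[OF numeral_neq_zero]
    fps_nth_zeta_even_fps_even[of 1]
  by (simp add: power_divide diff_divide_distrib add_divide_distrib algebra_simps)

lemma sin_cos_zeta_even_fps_coeff:
  fixes a :: real
  assumes "j \<ge> 1"
  shows "(2 * pi) ^ (2 * j) * fps_nth (fps_const (- 1 / 2) * (fps_X * fps_sin (1 / a))
      + fps_const 2 * (fps_cos (1 / a) * zeta_even_fps 1)) (2 * j)
    = (-1) ^ j * real j * (2 * pi) ^ (2 * j) / (fact (2 * j) * a ^ (2 * j - 1))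
      + (-1) ^ (j + 1) * (2 * pi) ^ (2 * j) *
        (\<Sum>m = 0..j. (-1) ^ (m + 1) /
           (fact (2 * j - 2 * m) * (2::real) powi (2 * int m - 1) * a ^ (2 * j - 2 * m) * pi ^ (2 * m))
           * zeta (real (2 * m)))"
proof -
  have sin_part: "- 1 / 2 * ((-1) ^ (j + 1) * real (2 * j) * (1 / a) ^ (2 * j - 1) / fact (2 * j))
      = (-1) ^ j * real j / (fact (2 * j) * a ^ (2 * j - 1))"
    by (simp add: power_one_over)
  have cos_part: "(\<Sum>m = 0..j. (-1) ^ (m + 1) * (1 / a) ^ (2 * j - 2 * m)
        / (fact (2 * j - 2 * m) * (2::real) powi (2 * int m - 1) * pi ^ (2 * m)) * zeta (real (2 * m)))
      = (\<Sum>m = 0..j. (-1) ^ (m + 1) /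
           (fact (2 * j - 2 * m) * (2::real) powi (2 * int m - 1) * a ^ (2 * j - 2 * m) * pi ^ (2 * m))
           * zeta (real (2 * m)))"
    by (rule sum.cong) (simp_all add: power_one_over)
  show ?thesis
    unfolding fps_add_nth fps_mult_left_const_nth fps_nth_X_mult_sin[OF assms]
      fps_nth_cos_mult_zeta_even_fps sin_part cos_part
    by (simp add: algebra_simps)
qed

lemma sin_cos_pair_zeta_even_fps_coeff:
  fixes a b :: real
  assumes "a \<noteq> 0" "j \<ge> 1"
  shows "(-1) ^ j * fact (2 * j) * fps_nth (fps_const (1 / 2) * (fps_X * fps_sin (1 / a))
      + fps_const (1 / 2) * (fps_X * fps_sin (b / a)) - fps_const 2 * (fps_cos (1 / a) * zeta_even_fps 1)
      - fps_const 2 * (fps_cos (b / a) * zeta_even_fps 1)) (2 * j)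
    = - real j / a ^ (2 * j - 1) * (1 + b ^ (2 * j - 1)) +
      (\<Sum>m = 0..j. fact (2 * j) / fact (2 * j - 2 * m) *
          ((-1) ^ (m + 1) / ((2::real) powi (2 * int m - 1) * pi ^ (2 * m))) *
          (1 + b ^ (2 * j - 2 * m)) * (zeta (real (2 * m)) / a ^ (2 * j - 2 * m)))"
proof -
  have sin_part: "(-1) ^ j * fact (2 * j) * (1 / 2 * ((-1) ^ (j + 1) * real (2 * j) * (1 / a) ^ (2 * j - 1) / fact (2 * j))
      + 1 / 2 * ((-1) ^ (j + 1) * real (2 * j) * (b / a) ^ (2 * j - 1) / fact (2 * j)))
      = - real j / a ^ (2 * j - 1) * (1 + b ^ (2 * j - 1))"
    using assms(1) by (simp add: power_divide field_simps)
  have cos_part: "(-1) ^ j * fact (2 * j) * (- 2 * ((-1) ^ (j + 1) / 2 * (\<Sum>m = 0..j. (-1) ^ (m + 1) * (1 / a) ^ (2 * j - 2 * m)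
        / (fact (2 * j - 2 * m) * (2::real) powi (2 * int m - 1) * pi ^ (2 * m)) * zeta (real (2 * m))))
      - 2 * ((-1) ^ (j + 1) / 2 * (\<Sum>m = 0..j. (-1) ^ (m + 1) * (b / a) ^ (2 * j - 2 * m)
        / (fact (2 * j - 2 * m) * (2::real) powi (2 * int m - 1) * pi ^ (2 * m)) * zeta (real (2 * m)))))
      = (\<Sum>m = 0..j. fact (2 * j) / fact (2 * j - 2 * m) *
          ((-1) ^ (m + 1) / ((2::real) powi (2 * int m - 1) * pi ^ (2 * m))) *
          (1 + b ^ (2 * j - 2 * m)) * (zeta (real (2 * m)) / a ^ (2 * j - 2 * m)))"
    unfolding sum_distrib_left sum_subtractf[symmetric] sum_distrib_left
    using assms(1) by (intro sum.cong) (simp_all add: power_divide field_simps)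
  show ?thesis
    unfolding fps_add_nth fps_sub_nth fps_mult_left_const_nth fps_nth_X_mult_sin[OF assms(2)]
      fps_nth_cos_mult_zeta_even_fps
    using sin_part cos_part by (simp add: algebra_simps)
qed

lemma coeff_half_scaled_eq:
  fixes C :: real
  assumes "j \<ge> 1"
  shows "(-1) ^ j * fact (2 * j) * (- 2 * (1 / 2) ^ (2 * j) * (C * zeta (real (2 * j)) / (2 * pi) ^ (2 * j)))
    = C * fact (2 * j) * (-1) ^ (j + 1) / (2 ^ (4 * j - 1) * pi ^ (2 * j)) * zeta (real (2 * j))"
proof -
  have "(2::real) ^ (4 * j - 1) * 2 = 2 ^ (2 * j) * 2 ^ (2 * j)"
    using assms by (simp flip: power_Suc2 power_add)
  then show ?thesis
    by (simp add: power_mult_distrib power_one_over field_simps)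
qed

lemma zeta_even_relation_3:
  assumes "j \<ge> 1"
  shows "((3::real) powi (1 - 2 * int j) - 1) * zeta (real (2 * j)) =
      (-1) ^ j * real j * (2 * pi) ^ (2 * j) / (fact (2 * j) * 3 ^ (2 * j - 1))
      + (-1) ^ (j + 1) * (2 * pi) ^ (2 * j) *
        (\<Sum>m = 0..j. (-1) ^ (m + 1) /
           (fact (2 * j - 2 * m) * (2::real) powi (2 * int m - 1) * 3 ^ (2 * j - 2 * m) * pi ^ (2 * m))
           * zeta (real (2 * m)))"
    (is "?lhs = ?rhs")
proof -
  have "?lhs = (2 * pi) ^ (2 * j) * fps_nth (fps_const 3 * zeta_even_fps (1 / 3) - zeta_even_fps 1) (2 * j)"
    unfolding fps_nth_zeta_even_combination_3 by simp
  also have "\<dots> = ?rhs"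
    unfolding zeta_even_fps_identity_3 by (rule sin_cos_zeta_even_fps_coeff[OF assms])
  finally show ?thesis .
qed

lemma zeta_even_relation_4:
  assumes "j \<ge> 1"
  shows "((4::real) powi (1 - 2 * int j) - 2 powi (1 - 2 * int j)) * zeta (real (2 * j)) =
      (-1) ^ j * real j * (2 * pi) ^ (2 * j) / (fact (2 * j) * 4 ^ (2 * j - 1))
      + (-1) ^ (j + 1) * (2 * pi) ^ (2 * j) *
        (\<Sum>m = 0..j. (-1) ^ (m + 1) /
           (fact (2 * j - 2 * m) * (2::real) powi (2 * int m - 1) * 4 ^ (2 * j - 2 * m) * pi ^ (2 * m))
           * zeta (real (2 * m)))"
    (is "?lhs = ?rhs")
proof -
  have "?lhs = (2 * pi) ^ (2 * j)
      * fps_nth (fps_const 4 * zeta_even_fps (1 / 4) - fps_const 2 * zeta_even_fps (1 / 2)) (2 * j)"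
    unfolding fps_nth_zeta_even_combination_4 by simp
  also have "\<dots> = ?rhs"
    unfolding zeta_even_fps_identity_4 by (rule sin_cos_zeta_even_fps_coeff[OF assms])
  finally show ?thesis .
qed

lemma zeta_even_relation_6:
  assumes "j \<ge> 1"
  shows "((6::real) powi (1 - 2 * int j) - 3 powi (1 - 2 * int j) - 2 powi (1 - 2 * int j) + 1)
      * zeta (real (2 * j)) =
      (-1) ^ j * real j * (2 * pi) ^ (2 * j) / (fact (2 * j) * 6 ^ (2 * j - 1))
      + (-1) ^ (j + 1) * (2 * pi) ^ (2 * j) *
        (\<Sum>m = 0..j. (-1) ^ (m + 1) /
           (fact (2 * j - 2 * m) * (2::real) powi (2 * int m - 1) * 6 ^ (2 * j - 2 * m) * pi ^ (2 * m))
           * zeta (real (2 * m)))"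
    (is "?lhs = ?rhs")
proof -
  have "?lhs = (2 * pi) ^ (2 * j) * fps_nth (fps_const 6 * zeta_even_fps (1 / 6)
      - fps_const 3 * zeta_even_fps (1 / 3) - fps_const 2 * zeta_even_fps (1 / 2) + zeta_even_fps 1) (2 * j)"
    unfolding fps_nth_zeta_even_combination_6 by simp
  also have "\<dots> = ?rhs"
    unfolding zeta_even_fps_identity_6 by (rule sin_cos_zeta_even_fps_coeff[OF assms])
  finally show ?thesis .
qed

lemma zeta_even_relation_12:
  assumes "j \<ge> 1"
  shows "- real j / 12 ^ (2 * j - 1) * (1 + 7 ^ (2 * j - 1)) +
      (\<Sum>m = 0..j. fact (2 * j) / fact (2 * j - 2 * m) *
          ((-1) ^ (m + 1) / ((2::real) powi (2 * int m - 1) * pi ^ (2 * m))) *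
          (1 + 7 ^ (2 * j - 2 * m)) * (zeta (real (2 * m)) / 12 ^ (2 * j - 2 * m)))
    = ((6::real) powi (1 - 2 * int j) - 3 powi (1 - 2 * int j) - 2 powi (1 - 2 * int j) + 1)
        * fact (2 * j) * (-1) ^ (j + 1) / (2 ^ (4 * j - 1) * pi ^ (2 * j)) * zeta (real (2 * j))"
    (is "?lhs = ?rhs")
proof -
  have "?lhs = (-1) ^ j * fact (2 * j) * fps_nth (fps_const (1 / 2) * (fps_X * fps_sin (1 / 12))
      + fps_const (1 / 2) * (fps_X * fps_sin (7 / 12)) - fps_const 2 * (fps_cos (1 / 12) * zeta_even_fps 1)
      - fps_const 2 * (fps_cos (7 / 12) * zeta_even_fps 1)) (2 * j)"
    by (rule sin_cos_pair_zeta_even_fps_coeff[where a = 12 and b = 7, symmetric]) (use assms in simp_all)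
  also have "\<dots> = (-1) ^ j * fact (2 * j) * (- 2 * (1 / 2) ^ (2 * j) * fps_nth (fps_const 6 * zeta_even_fps (1 / 6)
      - fps_const 3 * zeta_even_fps (1 / 3) - fps_const 2 * zeta_even_fps (1 / 2) + zeta_even_fps 1) (2 * j))"
    unfolding zeta_even_fps_identity_12
    using fps_nth_zeta_even_fps_half[of "1 / 6" "2 * j"] fps_nth_zeta_even_fps_half[of "1 / 3" "2 * j"]
      fps_nth_zeta_even_fps_half[of "1 / 2" "2 * j"] fps_nth_zeta_even_fps_half[of 1 "2 * j"]
    by (simp add: algebra_simps)
  also have "\<dots> = ?rhs"
    unfolding fps_nth_zeta_even_combination_6 by (rule coeff_half_scaled_eq[OF assms])
  finally show ?thesis .
qed

lemma zeta_even_relation_8: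
  assumes "j \<ge> 1"
  shows "- real j / 8 ^ (2 * j - 1) * (1 + 5 ^ (2 * j - 1)) +
      (\<Sum>m = 0..j. fact (2 * j) / fact (2 * j - 2 * m) *
          ((-1) ^ (m + 1) / ((2::real) powi (2 * int m - 1) * pi ^ (2 * m))) *
          (1 + 5 ^ (2 * j - 2 * m)) * (zeta (real (2 * m)) / 8 ^ (2 * j - 2 * m)))
    = ((4::real) powi (1 - 2 * int j) - 2 powi (1 - 2 * int j))
        * fact (2 * j) * (-1) ^ (j + 1) / (2 ^ (4 * j - 1) * pi ^ (2 * j)) * zeta (real (2 * j))"
    (is "?lhs = ?rhs")
proof -
  have "?lhs = (-1) ^ j * fact (2 * j) * fps_nth (fps_const (1 / 2) * (fps_X * fps_sin (1 / 8))
      + fps_const (1 / 2) * (fps_X * fps_sin (5 / 8)) - fps_const 2 * (fps_cos (1 / 8) * zeta_even_fps 1)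
      - fps_const 2 * (fps_cos (5 / 8) * zeta_even_fps 1)) (2 * j)"
    by (rule sin_cos_pair_zeta_even_fps_coeff[where a = 8 and b = 5, symmetric]) (use assms in simp_all)
  also have "\<dots> = (-1) ^ j * fact (2 * j) * (- 2 * (1 / 2) ^ (2 * j)
      * fps_nth (fps_const 4 * zeta_even_fps (1 / 4) - fps_const 2 * zeta_even_fps (1 / 2)) (2 * j))"
    unfolding zeta_even_fps_identity_8
    using fps_nth_zeta_even_fps_half[of "1 / 4" "2 * j"] fps_nth_zeta_even_fps_half[of "1 / 2" "2 * j"]
    by (simp add: algebra_simps)
  also have "\<dots> = ?rhs"
    unfolding fps_nth_zeta_even_combination_4 by (rule coeff_half_scaled_eq[OF assms])
  finally show ?thesis .
qed

theorem theorem1: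
  fixes j :: nat
  assumes "j \<ge> 1"
  shows
   "(((3::real) powi (1 - 2 * int j) - 1) * zeta (2 * j) =
      (-1) ^ j * real j * (2 * pi) ^ (2 * j) / (fact (2 * j) * 3 ^ (2 * j - 1))
      + (-1) ^ (j + 1) * (2 * pi) ^ (2 * j) *
        (\<Sum>m = 0..j. (-1) ^ (m + 1) /
           (fact (2 * j - 2 * m) * (2::real) powi (2 * int m - 1) * 3 ^ (2 * j - 2 * m) * pi ^ (2 * m))
           * zeta (2 * m)))
  \<and> (((4::real) powi (1 - 2 * int j) - 2 powi (1 - 2 * int j)) * zeta (2 * j) =
      (-1) ^ j * real j * (2 * pi) ^ (2 * j) / (fact (2 * j) * 4 ^ (2 * j - 1))
      + (-1) ^ (j + 1) * (2 * pi) ^ (2 * j) *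
        (\<Sum>m = 0..j. (-1) ^ (m + 1) /
           (fact (2 * j - 2 * m) * (2::real) powi (2 * int m - 1) * 4 ^ (2 * j - 2 * m) * pi ^ (2 * m))
           * zeta (2 * m)))
  \<and> (((6::real) powi (1 - 2 * int j) - 3 powi (1 - 2 * int j) - 2 powi (1 - 2 * int j) + 1) * zeta (2 * j) =
      (-1) ^ j * real j * (2 * pi) ^ (2 * j) / (fact (2 * j) * 6 ^ (2 * j - 1))
      + (-1) ^ (j + 1) * (2 * pi) ^ (2 * j) *
        (\<Sum>m = 0..j. (-1) ^ (m + 1) /
           (fact (2 * j - 2 * m) * (2::real) powi (2 * int m - 1) * 6 ^ (2 * j - 2 * m) * pi ^ (2 * m))
           * zeta (2 * m)))
  \<and> (- real j / 12 ^ (2 * j - 1) * (1 + 7 ^ (2 * j - 1)) +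
      (\<Sum>m = 0..j. fact (2 * j) / fact (2 * j - 2 * m) *
          ((-1) ^ (m + 1) / ((2::real) powi (2 * int m - 1) * pi ^ (2 * m))) *
          (1 + 7 ^ (2 * j - 2 * m)) * (zeta (2 * m) / 12 ^ (2 * j - 2 * m)))
    = ((6::real) powi (1 - 2 * int j) - 3 powi (1 - 2 * int j) - 2 powi (1 - 2 * int j) + 1)
        * fact (2 * j) * (-1) ^ (j + 1) / (2 ^ (4 * j - 1) * pi ^ (2 * j)) * zeta (2 * j))
  \<and> (- real j / 8 ^ (2 * j - 1) * (1 + 5 ^ (2 * j - 1)) +
      (\<Sum>m = 0..j. fact (2 * j) / fact (2 * j - 2 * m) *
          ((-1) ^ (m + 1) / ((2::real) powi (2 * int m - 1) * pi ^ (2 * m))) *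
          (1 + 5 ^ (2 * j - 2 * m)) * (zeta (2 * m) / 8 ^ (2 * j - 2 * m)))
    = ((4::real) powi (1 - 2 * int j) - 2 powi (1 - 2 * int j))
        * fact (2 * j) * (-1) ^ (j + 1) / (2 ^ (4 * j - 1) * pi ^ (2 * j)) * zeta (2 * j))"
  using zeta_even_relation_3[OF assms] zeta_even_relation_4[OF assms] zeta_even_relation_6[OF assms]
    zeta_even_relation_12[OF assms] zeta_even_relation_8[OF assms]
  by (intro conjI)

end
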